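(* Under the standing assumptions below, let $\gamma>0$ and let $\{(y^t,z^t,x^t)\}$ be generated by the PR splitting iteration. Then for every $t\ge 1$, \[ \mathcal{P}_\gamma(y^t,z^t,x^t)\ge f(z^t)+g(z^t)+\frac12\left(\frac1\gamma-L\right)\|y^t-z^t\|^2 . \]
   Context: Standing assumptions: $f:\mathbb{R}^n\to\mathbb{R}$ is differentiable and strongly convex with modulus at least $\sigma>0$, and $\nabla f$ is Lipschitz continuous with modulus at most $L>0$. The function $g:\mathbb{R}^n\to(-\infty,\infty]$ is proper and lower semicontinuous, and for the $\gamma>0$ used, $\operatorname{Argmin}_u\{\gamma g(u)+\frac12\|u-w\|^2\}$ is nonempty for every $w\in\mathbb{R}^n$. PR splitting iteration: given $x^0$ and $\gamma>0$, for $t=0,1,2,\dots$: $y^{t+1}=\operatorname{argmin}_y\{f(y)+\frac{1}{2\gamma}\|y-x^t\|^2\}$; $z^{t+1}\in\operatorname{Argmin}_z\{g(z)+\frac{1}{2\gamma}\|2y^{t+1}-x^t-z\|^2\}$; $x^{t+1}=x^t+2(z^{t+1}-y^{t+1})$. Merit function: $\mathcal{P}_\gamma(y,z,x):=f(y)+g(z)-\frac{3}{2\gamma}\|y-z\|^2+\frac{1}{\gamma}\langle x-y,z-y\rangle$. *)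

theory Defs
  imports "HOL-Analysis.Analysis" "HOL-Library.Extended_Real"
begin

definition strongly_convex_with :: "real \<Rightarrow> ('a::real_inner \<Rightarrow> real) \<Rightarrow> bool" where
  "strongly_convex_with \<sigma> f \<longleftrightarrow> convex_on UNIV (\<lambda>x. f x - \<sigma> / 2 * (norm x)\<^sup>2)"

definition proper_fun :: "('a \<Rightarrow> ereal) \<Rightarrow> bool" where
  "proper_fun g \<longleftrightarrow> (\<forall>x. g x \<noteq> -\<infinity>) \<and> (\<exists>x. g x \<noteq> \<infinity>)"

definition lsc_fun :: "('a::topological_space \<Rightarrow> ereal) \<Rightarrow> bool" where
  "lsc_fun g \<longleftrightarrow> (\<forall>x. g x \<le> Liminf (at x) g)"

definition merit :: "('a::real_inner \<Rightarrow> real) \<Rightarrow> ('a \<Rightarrow> ereal) \<Rightarrow> real \<Rightarrow> 'a \<Rightarrow> 'a \<Rightarrow> 'a \<Rightarrow> ereal" where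
  "merit f g \<gamma> y z x = ereal (f y) + g z
     + ereal (- 3 / (2 * \<gamma>) * (norm (y - z))\<^sup>2 + 1 / \<gamma> * inner (x - y) (z - y))"

end

theory Submission imports Defs begin

text \<open>Since y is the proximal point of f at the previous x, the optimality condition
  gives (x_prev - y)/gamma = grad f(y); the x-update then rewrites the coupling term of the
  merit function as <grad f(y), z - y> + (2/gamma) |z - y|^2. The descent lemma for the
  L-smooth function f bounds f(z) by f(y) + <grad f(y), z - y> + (L/2) |z - y|^2, and the
  remaining quadratic terms combine to (1/gamma - L)/2 |y - z|^2.\<close>

lemma lipschitz_gradient_upper_bound:
  fixes f :: "'a::real_inner \<Rightarrow> real" and f' :: "'a \<Rightarrow> 'a"
  assumes f_grad: "\<And>u. (f has_derivative (\<lambda>h. inner (f' u) h)) (at u)"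
    and f'_lip: "L-lipschitz_on UNIV f'"
  shows "f z \<le> f y + inner (f' y) (z - y) + L / 2 * (norm (z - y))\<^sup>2"
proof -
  define d where "d = z - y"
  \<comment> \<open>f along the segment minus its quadratic upper model; Lipschitz continuity of f' makes it nonincreasing\<close>
  define \<phi> where "\<phi> s = f (y + s *\<^sub>R d) - s * inner (f' y) d - L / 2 * s\<^sup>2 * (norm d)\<^sup>2" for s
  define \<phi>' where "\<phi>' s = inner (f' (y + s *\<^sub>R d) - f' y) d - L * s * (norm d)\<^sup>2" for s
  have \<phi>_deriv: "DERIV \<phi> s :> \<phi>' s" for s
  proof -
    have "((\<lambda>s. f (y + s *\<^sub>R d)) has_derivative (\<lambda>h. inner (f' (y + s *\<^sub>R d)) (h *\<^sub>R d))) (at s)"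
      by (rule has_derivative_compose[OF _ f_grad]) (auto intro!: derivative_eq_intros)
    then have "((\<lambda>s. f (y + s *\<^sub>R d)) has_real_derivative inner (f' (y + s *\<^sub>R d)) d) (at s)"
      by (simp add: has_field_derivative_def mult_commute_abs)
    then show ?thesis
      unfolding \<phi>_def \<phi>'_def by (auto intro!: derivative_eq_intros simp: inner_diff_left)
  qed
  have \<phi>'_nonpos: "\<phi>' s \<le> 0" if "0 \<le> s" for s
  proof -
    have "inner (f' (y + s *\<^sub>R d) - f' y) d \<le> norm (f' (y + s *\<^sub>R d) - f' y) * norm d"
      by (rule norm_cauchy_schwarz)
    also have "norm (f' (y + s *\<^sub>R d) - f' y) \<le> L * (s * norm d)"
      using lipschitz_onD[OF f'_lip, of "y + s *\<^sub>R d" y] that by (simp add: dist_norm)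
    finally show ?thesis
      unfolding \<phi>'_def by (smt (verit) mult_right_mono norm_ge_zero power2_eq_square mult.assoc)
  qed
  have "\<phi> 1 \<le> \<phi> 0"
    using \<phi>_deriv \<phi>'_nonpos by (intro DERIV_nonpos_imp_nonincreasing[of 0 1 \<phi>]) auto
  then show ?thesis
    unfolding \<phi>_def d_def by simp
qed

lemma prox_point_gradient_eq:
  fixes f :: "'a::real_inner \<Rightarrow> real" and f' :: "'a \<Rightarrow> 'a"
  assumes f_grad: "\<And>u. (f has_derivative (\<lambda>h. inner (f' u) h)) (at u)"
    and gamma_pos: "\<gamma> > 0"
    and prox: "\<forall>v. f p + 1 / (2 * \<gamma>) * (norm (p - w))\<^sup>2 \<le> f v + 1 / (2 * \<gamma>) * (norm (v - w))\<^sup>2"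
  shows "w - p = \<gamma> *\<^sub>R f' p"
proof -
  define r where "r = f' p + (1 / \<gamma>) *\<^sub>R (p - w)"
  have "((\<lambda>v. f v + 1 / (2 * \<gamma>) * inner (v - w) (v - w)) has_derivative (\<lambda>k. inner r k)) (at p)"
    using gamma_pos
    by (auto intro!: derivative_eq_intros f_grad
        simp: r_def fun_eq_iff inner_add_left inner_add_right inner_diff_right inner_commute field_simps)
  then have "(\<lambda>k. inner r k) = (\<lambda>k. 0)"
    by (rule differential_zero_maxmin[OF UNIV_I open_UNIV])
      (use prox in \<open>auto simp: power2_norm_eq_inner[symmetric]\<close>)
  then have "r = 0"
    by (metis inner_eq_zero_iff)
  moreover have "\<gamma> *\<^sub>R r = \<gamma> *\<^sub>R f' p - (w - p)"
    using gamma_pos by (simp add: r_def scaleR_add_right scaleR_diff_right)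
  ultimately show ?thesis
    by simp
qed

lemma merit_lower_bound_step:
  fixes f :: "'a::real_inner \<Rightarrow> real" and f' :: "'a \<Rightarrow> 'a" and g :: "'a \<Rightarrow> ereal"
  assumes f_grad: "\<And>u. (f has_derivative (\<lambda>h. inner (f' u) h)) (at u)"
    and f'_lip: "L-lipschitz_on UNIV f'"
    and gamma_pos: "\<gamma> > 0"
    and grad_eq: "w - y = \<gamma> *\<^sub>R f' y"
    and x_eq: "x = w + 2 *\<^sub>R (z - y)"
  shows "merit f g \<gamma> y z x \<ge> ereal (f z) + g z + ereal (1 / 2 * (1 / \<gamma> - L) * (norm (y - z))\<^sup>2)"
proof -
  have "x - y = \<gamma> *\<^sub>R f' y + 2 *\<^sub>R (z - y)"
    using grad_eq x_eq by (simp add: algebra_simps)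
  then have "inner (x - y) (z - y) = \<gamma> * inner (f' y) (z - y) + 2 * (norm (z - y))\<^sup>2"
    by (simp add: inner_add_left power2_norm_eq_inner)
  then have coupling: "1 / \<gamma> * inner (x - y) (z - y) = inner (f' y) (z - y) + 2 / \<gamma> * (norm (z - y))\<^sup>2"
    using gamma_pos by (simp add: field_simps)
  have "f z \<le> f y + inner (f' y) (z - y) + L / 2 * (norm (z - y))\<^sup>2"
    by (rule lipschitz_gradient_upper_bound[OF f_grad f'_lip])
  moreover have "- 3 / (2 * \<gamma>) * (norm (z - y))\<^sup>2 + 2 / \<gamma> * (norm (z - y))\<^sup>2
      = 1 / 2 * (1 / \<gamma> - L) * (norm (z - y))\<^sup>2 + L / 2 * (norm (z - y))\<^sup>2"
    using gamma_pos by (simp add: field_simps)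
  ultimately have "f z + 1 / 2 * (1 / \<gamma> - L) * (norm (y - z))\<^sup>2
      \<le> f y + (- 3 / (2 * \<gamma>) * (norm (y - z))\<^sup>2 + 1 / \<gamma> * inner (x - y) (z - y))"
    unfolding coupling norm_minus_commute[of y z] by linarith
  then show ?thesis
    unfolding merit_def by (cases "g z") auto
qed

theorem mainTheorem3:
  fixes f :: "'a::euclidean_space \<Rightarrow> real"
    and f' :: "'a \<Rightarrow> 'a"
    and g :: "'a \<Rightarrow> ereal"
    and \<sigma> L \<gamma> :: real
    and y z x :: "nat \<Rightarrow> 'a"
  assumes f_grad: "\<And>u. (f has_derivative (\<lambda>h. inner (f' u) h)) (at u)"
    and sigma_pos: "\<sigma> > 0"
    and f_sc: "strongly_convex_with \<sigma> f"
    and L_pos: "L > 0"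
    and f'_lip: "L-lipschitz_on UNIV f'"
    and g_proper: "proper_fun g"
    and g_lsc: "lsc_fun g"
    and gamma_pos: "\<gamma> > 0"
    and prox_nonempty: "\<And>w. \<exists>u. \<forall>v. ereal \<gamma> * g u + ereal ((norm (u - w))\<^sup>2 / 2)
                                  \<le> ereal \<gamma> * g v + ereal ((norm (v - w))\<^sup>2 / 2)"
    and y_step: "\<And>t. \<forall>v. f (y (Suc t)) + 1 / (2 * \<gamma>) * (norm (y (Suc t) - x t))\<^sup>2
                          \<le> f v + 1 / (2 * \<gamma>) * (norm (v - x t))\<^sup>2"
    and z_step: "\<And>t. \<forall>v. g (z (Suc t)) + ereal (1 / (2 * \<gamma>) * (norm (2 *\<^sub>R y (Suc t) - x t - z (Suc t)))\<^sup>2)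
                          \<le> g v + ereal (1 / (2 * \<gamma>) * (norm (2 *\<^sub>R y (Suc t) - x t - v))\<^sup>2)"
    and x_step: "\<And>t. x (Suc t) = x t + 2 *\<^sub>R (z (Suc t) - y (Suc t))"
    and t_ge: "t \<ge> 1"
  shows "merit f g \<gamma> (y t) (z t) (x t)
           \<ge> ereal (f (z t)) + g (z t) + ereal (1 / 2 * (1 / \<gamma> - L) * (norm (y t - z t))\<^sup>2)"
proof -
  obtain s where t: "t = Suc s"
    using t_ge by (cases t) auto
  have "x s - y t = \<gamma> *\<^sub>R f' (y t)"
    unfolding t by (rule prox_point_gradient_eq[OF f_grad gamma_pos y_step])
  from this x_step[of s] show ?thesis
    unfolding t[symmetric] by (rule merit_lower_bound_step[OF f_grad f'_lip gamma_pos])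
qed

end
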